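(* Let $m,g,H,\mathrm{C_dA},\rho,P_0>0$, $\mathrm{C_{rr}}\ge 0$ and $0\le\lambda<1$ be constants. For $D>0$, set $$L(D)=\sqrt{H^2+D^2},\qquad a(D)=m\,g\,(H+\mathrm{C_{rr}}D),\qquad b=\tfrac12\mathrm{C_dA}\,\rho,\qquad c=(1-\lambda)P_0,$$ and let $V(D)$ be the unique positive solution of $$a(D)\,\frac{V}{L(D)}+b\,V^3=c.$$ Define $T(D)=L(D)/V(D)$. Then $$\frac{\mathrm dT}{\mathrm dD}>0\quad\text{for all } D>0.$$ That is, among straight-line ascents with fixed height gain $H$, the ascent time strictly decreases as the horizontal distance $D$ decreases (the climb gets steeper). *)

theory Defs
  imports "HOL-Analysis.Analysis"
begin

end

theory Submission
  imports Defs
begin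

text \<open>Dividing the power balance by \<open>V\<close> shows that \<open>V(D)\<close> is the inverse of the strictly
decreasing bijection \<open>\<phi>(v) = c/v - b v\<^sup>2\<close> from \<open>(0,\<infinity>)\<close> onto \<open>\<real>\<close>, evaluated at the resistive
force \<open>F(D) = a(D)/L(D)\<close>. Hence \<open>V' = F'/\<phi>'(V)\<close> with \<open>\<phi>'(V) = -c/V\<^sup>2 - 2bV < 0\<close>. In the
numerator \<open>L'V - LV'\<close> of \<open>T'\<close>, multiplied by \<open>-\<phi>'(V)\<close>, the power balance
\<open>c/V = F + bV\<^sup>2\<close> cancels every term involving \<open>a\<close> except \<open>a'\<close>, leaving \<open>3bV\<^sup>2L' + a'\<close>, which is
positive because \<open>L' = D/L > 0\<close> and \<open>a' = m g Crr \<ge> 0\<close>.\<close>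

definition steady_speed :: "real \<Rightarrow> real \<Rightarrow> real \<Rightarrow> real" where
  "steady_speed b c F = (THE v. v > 0 \<and> F * v + b * v ^ 3 = c)"

lemma DERIV_inverse_of_pos_bijection:
  fixes f :: "real \<Rightarrow> real"
  assumes bij: "\<And>y. \<exists>!x. x > 0 \<and> f x = y"
    and cont: "\<And>x. x > 0 \<Longrightarrow> isCont f x"
    and der: "(f has_real_derivative f') (at x)" and "f' \<noteq> 0" and "x > 0"
  shows "((\<lambda>y. THE x. x > 0 \<and> f x = y) has_real_derivative inverse f') (at (f x))"
proof -
  define g where "g y = (THE x. x > 0 \<and> f x = y)" for y
  have f_g: "f (g y) = y" for y
    unfolding g_def using theI'[OF bij] by blast
  have g_f: "g (f z) = z" if "z > 0" for z
    unfolding g_def using bij that by (intro the1_equality) auto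
  have "isCont g (f x)"
    by (rule isCont_inverse_function2[of "x / 2" x "2 * x"]) (use \<open>x > 0\<close> g_f cont in auto)
  moreover have "(f has_real_derivative f') (at (g (f x)))"
    using der g_f \<open>x > 0\<close> by simp
  ultimately have "(g has_real_derivative inverse f') (at (f x))"
    by (intro DERIV_inverse_function[where a = "f x - 1" and b = "f x + 1"])
       (use \<open>f' \<noteq> 0\<close> f_g in auto)
  then show ?thesis
    unfolding g_def .
qed

lemma drag_balance_strict_antimono:
  fixes b c v w :: real
  assumes "b > 0" "c > 0" "0 < v" "v < w"
  shows "c / w - b * w\<^sup>2 < c / v - b * v\<^sup>2"
proof -
  have "c / w < c / v"
    using assms by (simp add: frac_less2)
  moreover have "b * v\<^sup>2 < b * w\<^sup>2"
    using assms by (simp add: power_strict_mono)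
  ultimately show ?thesis
    by linarith
qed

lemma drag_balance_ex1:
  fixes b c F :: real
  assumes b: "b > 0" and c: "c > 0"
  shows "\<exists>!v. v > 0 \<and> c / v - b * v\<^sup>2 = F"
proof -
  define p where "p v = F * v + b * v ^ 3" for v
  define B where "B = 1 + (c + \<bar>F\<bar>) / b"
  have B: "B \<ge> 1" "b * B \<ge> b + c + \<bar>F\<bar>"
    using b c unfolding B_def by (simp_all add: field_simps)
  moreover have "b * B\<^sup>2 \<ge> b * B"
    using B(1) b by (simp add: power2_eq_square mult_left_mono)
  ultimately have "b * B\<^sup>2 + F \<ge> b + c"
    by linarith
  then have "B * (b * B\<^sup>2 + F) \<ge> 1 * (b + c)"
    using B(1) b c by (intro mult_mono) auto
  then have "p B \<ge> c"
    unfolding p_def using b by (simp add: algebra_simps power3_eq_cube power2_eq_square)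
  moreover have "continuous_on {0..B} p"
    unfolding p_def by (intro continuous_intros)
  ultimately obtain v where v: "0 \<le> v" "p v = c"
    using IVT'[of p 0 c B] c B(1) unfolding p_def by auto
  with c have "v > 0"
    unfolding p_def by (cases "v = 0") auto
  with v have "c / v - b * v\<^sup>2 = F"
    unfolding p_def by (simp add: field_simps power3_eq_cube power2_eq_square)
  show ?thesis
  proof (rule ex1I)
    show "v > 0 \<and> c / v - b * v\<^sup>2 = F"
      using \<open>v > 0\<close> \<open>c / v - b * v\<^sup>2 = F\<close> ..
  next
    fix w assume "w > 0 \<and> c / w - b * w\<^sup>2 = F"
    then show "w = v"
      using drag_balance_strict_antimono[OF b c, of w v] drag_balance_strict_antimono[OF b c, of v w]
        \<open>v > 0\<close> \<open>c / v - b * v\<^sup>2 = F\<close>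
      by (cases w v rule: linorder_cases) auto
  qed
qed

lemma steady_speed_eq_inverse:
  assumes "b > 0" "c > 0"
  shows "steady_speed b c F = (THE v. v > 0 \<and> c / v - b * v\<^sup>2 = F)"
proof -
  have "F * v + b * v ^ 3 = c \<longleftrightarrow> c / v - b * v\<^sup>2 = F" if "v > 0" for v :: real
    using that by (auto simp: field_simps power3_eq_cube power2_eq_square)
  then have "(\<lambda>v. v > 0 \<and> F * v + b * v ^ 3 = c) = (\<lambda>v. v > 0 \<and> c / v - b * v\<^sup>2 = F)"
    by auto
  then show ?thesis
    unfolding steady_speed_def by simp
qed

lemma
  assumes "b > 0" "c > 0"
  shows steady_speed_pos: "steady_speed b c F > 0"
    and steady_speed_balance: "F * steady_speed b c F + b * steady_speed b c F ^ 3 = c"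
proof -
  define v where "v = steady_speed b c F"
  have "v > 0 \<and> c / v - b * v\<^sup>2 = F"
    unfolding v_def steady_speed_eq_inverse[OF assms] by (rule theI'[OF drag_balance_ex1[OF assms]])
  then show "v > 0" "F * v + b * v ^ 3 = c"
    by (auto simp: field_simps power3_eq_cube power2_eq_square)
qed

lemma DERIV_steady_speed:
  fixes b c F :: real
  assumes b: "b > 0" and c: "c > 0"
  defines "v \<equiv> steady_speed b c F"
  shows "(steady_speed b c has_real_derivative inverse (- c / v\<^sup>2 - 2 * b * v)) (at F)"
proof -
  have "v > 0" and "F = c / v - b * v\<^sup>2"
    using steady_speed_pos[OF b c, of F] steady_speed_balance[OF b c, of F] unfolding v_def
    by (auto simp: field_simps power3_eq_cube power2_eq_square)
  moreover have "((\<lambda>v. c / v - b * v\<^sup>2) has_real_derivative - c / v\<^sup>2 - 2 * b * v) (at v)"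
    using \<open>v > 0\<close> by (auto intro!: derivative_eq_intros simp: field_simps power2_eq_square)
  moreover have "- c / v\<^sup>2 - 2 * b * v \<noteq> 0"
  proof -
    have "c / v\<^sup>2 > 0" "b * v > 0"
      using \<open>v > 0\<close> b c by simp_all
    then show ?thesis
      by linarith
  qed
  moreover have "isCont (\<lambda>v. c / v - b * v\<^sup>2) x" if "x > 0" for x
    using that by (intro continuous_intros) auto
  ultimately show ?thesis
    unfolding steady_speed_eq_inverse[OF b c, abs_def]
    using DERIV_inverse_of_pos_bijection[OF drag_balance_ex1[OF b c]] by simp
qed

lemma ascent_time_numerator_pos:
  fixes v L L' a a' b c :: real
  assumes "v > 0" "L > 0" "b > 0" "c > 0" "L' > 0" "a' \<ge> 0"
    and balance: "a / L * v + b * v ^ 3 = c"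
  shows "L' * v - L * (inverse (- c / v\<^sup>2 - 2 * b * v) * ((a' * L - a * L') / (L * L))) > 0"
proof -
  define P where "P = - c / v\<^sup>2 - 2 * b * v"
  have "c / v\<^sup>2 > 0" "b * v > 0"
    using assms by simp_all
  then have "P < 0"
    unfolding P_def by linarith
  have c_div_v: "c / v = a / L + b * v\<^sup>2"
    using \<open>v > 0\<close> unfolding balance[symmetric] by (simp add: field_simps power2_eq_square power3_eq_cube)
  have "(L' * v - L * (inverse P * ((a' * L - a * L') / (L * L)))) * - P
      = L' * v * - P + L * ((a' * L - a * L') / (L * L))"
    using \<open>P < 0\<close> \<open>L > 0\<close> by (simp add: field_simps)
  also have "\<dots> = L' * (c / v) + 2 * b * v\<^sup>2 * L' + (a' * L - a * L') / L"
    using \<open>v > 0\<close> \<open>L > 0\<close> unfolding P_def by (simp add: field_simps power2_eq_square)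
  also have "\<dots> = 3 * b * v\<^sup>2 * L' + a'"
    unfolding c_div_v using \<open>L > 0\<close> by (simp add: field_simps power2_eq_square)
  also have "\<dots> > 0"
    using assms by (simp add: add_pos_nonneg)
  finally have "0 < (L' * v - L * (inverse P * ((a' * L - a * L') / (L * L)))) * - P" .
  then show ?thesis
    unfolding P_def[symmetric] using \<open>P < 0\<close> by (metis zero_less_mult_pos2 neg_0_less_iff_less)
qed

lemma DERIV_ascent_time_pos:
  fixes L a :: "real \<Rightarrow> real"
  assumes "b > 0" "c > 0"
    and dL: "(L has_real_derivative L') (at D)" and "L D > 0" "L' > 0"
    and da: "(a has_real_derivative a') (at D)" and "a' \<ge> 0"
  shows "\<exists>T'. ((\<lambda>x. L x / steady_speed b c (a x / L x)) has_real_derivative T') (at D) \<and> T' > 0"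
proof -
  define v where "v = steady_speed b c (a D / L D)"
  have "v > 0" "a D / L D * v + b * v ^ 3 = c"
    unfolding v_def using steady_speed_pos steady_speed_balance \<open>b > 0\<close> \<open>c > 0\<close> by blast+
  define V' where "V' = inverse (- c / v\<^sup>2 - 2 * b * v) * ((a' * L D - a D * L') / (L D * L D))"
  have "((\<lambda>x. steady_speed b c (a x / L x)) has_real_derivative V') (at D)"
    unfolding V'_def v_def using \<open>L D > 0\<close>
    by (intro DERIV_chain2[OF DERIV_steady_speed[OF \<open>b > 0\<close> \<open>c > 0\<close>] DERIV_divide[OF da dL]]) simp
  from DERIV_divide[OF dL this]
  have "((\<lambda>x. L x / steady_speed b c (a x / L x)) has_real_derivative (L' * v - L D * V') / (v * v)) (at D)"
    using \<open>v > 0\<close> unfolding v_def by simp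
  moreover have "L' * v - L D * V' > 0"
    unfolding V'_def using ascent_time_numerator_pos \<open>v > 0\<close> \<open>L D > 0\<close> \<open>b > 0\<close> \<open>c > 0\<close>
      \<open>L' > 0\<close> \<open>a' \<ge> 0\<close> \<open>a D / L D * v + b * v ^ 3 = c\<close> by blast
  ultimately show ?thesis
    using \<open>v > 0\<close> by (blast intro: divide_pos_pos mult_pos_pos)
qed

theorem lemma2:
  fixes m g H CdA rho P0 Crr lambda :: real
    and L a V T :: "real \<Rightarrow> real" and b c :: real
  assumes "m > 0" "g > 0" "H > 0" "CdA > 0" "rho > 0" "P0 > 0"
    and "Crr \<ge> 0" and "0 \<le> lambda" "lambda < 1"
  defines "L \<equiv> (\<lambda>D. sqrt (H\<^sup>2 + D\<^sup>2))"
    and "a \<equiv> (\<lambda>D. m * g * (H + Crr * D))"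
    and "b \<equiv> 1/2 * CdA * rho"
    and "c \<equiv> (1 - lambda) * P0"
    and "V \<equiv> (\<lambda>D. THE v. v > 0 \<and> a D * (v / L D) + b * v ^ 3 = c)"
    and "T \<equiv> (\<lambda>D. L D / V D)"
  shows "\<forall>D > 0. \<exists>T'. (T has_real_derivative T') (at D) \<and> T' > 0"
proof (intro allI impI)
  fix D :: real
  assume "D > 0"
  have "b > 0" "c > 0" "m * g * Crr \<ge> 0"
    using assms by (simp_all add: b_def c_def)
  have "H\<^sup>2 + D\<^sup>2 > 0"
    using \<open>H > 0\<close> by (simp add: add_pos_nonneg)
  then have "(L has_real_derivative D / L D) (at D)" "L D > 0"
    unfolding L_def by (auto intro!: derivative_eq_intros simp: field_simps power2_eq_square)
  moreover have "(a has_real_derivative m * g * Crr) (at D)"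
    unfolding a_def by (auto intro!: derivative_eq_intros)
  moreover have "T = (\<lambda>x. L x / steady_speed b c (a x / L x))"
    unfolding T_def V_def steady_speed_def by (simp add: mult.commute)
  ultimately show "\<exists>T'. (T has_real_derivative T') (at D) \<and> T' > 0"
    using DERIV_ascent_time_pos[OF \<open>b > 0\<close> \<open>c > 0\<close>] \<open>D > 0\<close> \<open>m * g * Crr \<ge> 0\<close> by simp
qed

end
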